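(* Let $\mathcal{D}$ be a dyadic grid, $j\in\mathbb{N}$, and let $f,g$ be functions supported in a cube $Q_0\in\mathcal{D}$ with $f,g\in L^\infty$. Define \[ B_j^{\mathcal{D}}\restriction_{Q_0^\complement}(g,f)=\int_{\mathbb{R}^d\setminus Q_0}\sum_{K\in\mathcal{D}}\langle|g|\rangle_{3K}\sum_{\substack{P\in\mathcal{D},\,P\subset 3K\\ \ell P=2^{-j}\ell K}}\frac{\langle f,h_P\rangle^2}{|P|}\mathbf{1}_P(x)\,\mathrm{d}x. \] Then $B_j^{\mathcal{D}}\restriction_{Q_0^\complement}(g,f)\lesssim_d 2^{-jd}\langle|g|\rangle_{Q_0}\langle|f|\rangle_{Q_0}^2|Q_0|$.
   Context: A dyadic grid is the standard grid $\bigcup_j\{2^{-j}([0,1)^d+m):m\in\mathbb{Z}^d\}$ or a translate of it by $\omega\in(\{0,1\}^d)^{\mathbb{Z}}$ as in the construction $R\mapsto R+\sum_{i>j}\omega_i2^{-i}$ for $\ell R=2^{-j}$. $3K$ is the cube concentric with $K$ of side $3\ell K$; $\langle u\rangle_Q=|Q|^{-1}\int_Qu$. For a dyadic cube $P=P_1\times\dots\times P_d$, the Haar functions are $h_P^\epsilon=\prod_i h_{P_i}^{\epsilon_i}$, $\epsilon\in\{0,1\}^d\setminus\{0\}^d$, where $h_I^0=|I|^{-1/2}\mathbf{1}_I$ and $h_I^1=|I|^{-1/2}(\mathbf{1}_{I^-}-\mathbf{1}_{I^+})$ with $I^\pm$ the dyadic halves of $I$; $\langle f,h_P\rangle^2$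 means $\sum_\epsilon\langle f,h_P^\epsilon\rangle^2$. *)

theory Defs
  imports "HOL-Analysis.Analysis"
begin

text \<open>A cube is represented by its lower corner and its side length:
  (a, s) stands for the half-open cube a + [0,s)^d.\<close>
type_synonym 'n cube = "(real^'n) \<times> real"

definition cube_set :: "'n::finite cube \<Rightarrow> (real^'n) set" where
  "cube_set Q = {x. \<forall>i. fst Q $ i \<le> x $ i \<and> x $ i < fst Q $ i + snd Q}"

definition side :: "'n::finite cube \<Rightarrow> real" where
  "side Q = snd Q"

definition vol :: "'n::finite cube \<Rightarrow> real" where
  "vol Q = snd Q ^ CARD('n)"

definition triple :: "'n::finite cube \<Rightarrow> 'n cube" where
  "triple Q = (fst Q - (\<chi> i. snd Q), 3 * snd Q)"

text \<open>Shift of the translated dyadic grid at scale 2^(-j): sum_{i>j} omega_i 2^(-i).\<close>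
definition grid_shift :: "(int \<Rightarrow> 'n::finite \<Rightarrow> bool) \<Rightarrow> int \<Rightarrow> real^'n" where
  "grid_shift \<omega> j = (\<chi> i. (\<Sum>k. (if \<omega> (j + 1 + int k) i then 1 else 0) * 2 powr (- real_of_int (j + 1 + int k))))"

text \<open>The dyadic grid D_omega; omega = (\<lambda>_ _. False) gives the standard grid.\<close>
definition dyadic_grid :: "(int \<Rightarrow> 'n::finite \<Rightarrow> bool) \<Rightarrow> 'n cube set" where
  "dyadic_grid \<omega> = {(2 powr (- real_of_int j) *\<^sub>R (\<chi> i. real_of_int (m $ i)) + grid_shift \<omega> j,
                        2 powr (- real_of_int j)) | j (m :: int^'n). True}"

definition haar1 :: "bool \<Rightarrow> real \<Rightarrow> real \<Rightarrow> real \<Rightarrow> real" where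
  "haar1 e a s t = (if e
     then s powr (-1/2) * (indicator {a..<a + s/2} t - indicator {a + s/2..<a + s} t)
     else s powr (-1/2) * indicator {a..<a + s} t)"

definition haar :: "'n::finite cube \<Rightarrow> ('n \<Rightarrow> bool) \<Rightarrow> real^'n \<Rightarrow> real" where
  "haar P \<epsilon> x = (\<Prod>i\<in>UNIV. haar1 (\<epsilon> i) (fst P $ i) (snd P) (x $ i))"

text \<open>\<langle>f,h_P\<rangle>^2 = sum over epsilon \<noteq> 0 of \<langle>f,h_P^epsilon\<rangle>^2.\<close>
definition haar_sq :: "(real^'n \<Rightarrow> real) \<Rightarrow> 'n::finite cube \<Rightarrow> real" where
  "haar_sq f P = (\<Sum>\<epsilon>\<in>{\<epsilon>. \<epsilon> \<noteq> (\<lambda>_. False)}. (\<integral>x. f x * haar P \<epsilon> x \<partial>lborel)^2)"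

definition avg_abs :: "(real^'n \<Rightarrow> real) \<Rightarrow> 'n::finite cube \<Rightarrow> ennreal" where
  "avg_abs u Q = (\<integral>\<^sup>+ x\<in>cube_set Q. ennreal \<bar>u x\<bar> \<partial>lborel) / ennreal (vol Q)"

definition B_out :: "(int \<Rightarrow> 'n::finite \<Rightarrow> bool) \<Rightarrow> nat \<Rightarrow> 'n cube
     \<Rightarrow> (real^'n \<Rightarrow> real) \<Rightarrow> (real^'n \<Rightarrow> real) \<Rightarrow> ennreal" where
  "B_out \<omega> j Q0 g f =
     (\<integral>\<^sup>+ x\<in>UNIV - cube_set Q0.
        (\<Sum>\<^sub>\<infinity>K\<in>dyadic_grid \<omega>.
           avg_abs g (triple K) *
           (\<Sum>\<^sub>\<infinity>P\<in>{P\<in>dyadic_grid \<omega>. cube_set P \<subseteq> cube_set (triple K)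
                               \<and> side P = (1/2)^j * side K}.
              ennreal (haar_sq f P / vol P) * indicator (cube_set P) x)) \<partial>lborel)"

end

theory Submission
  imports Defs
begin

text \<open>
  A cube P can contribute only if it meets both Q0 and its complement: the Haar coefficients of f
  vanish on cubes disjoint from Q0, and P - Q0 is empty for P inside Q0. By nestedness of dyadic
  cubes such a P strictly contains Q0. For it, the bound |h_P| <= |P|^(-1/2) gives
  sum_eps <f, h_P^eps>^2 <= (2^d - 1) |f|_1^2 / |P|, while |P - Q0| <= |P| and
  <|g|>_3K <= |g|_1 / |3K| = |g|_1 / (3^d 2^(jd) |P|). So the pair (K, P) contributes at most
  (2^d - 1) 3^(-d) 2^(-jd) <|g|>_Q0 <|f|>_Q0^2 |Q0| times the weight (|Q0| / |P|)^2.
  At each scale at most 4^d triples 3K meet Q0, and each contains at most 2^d relevant cubes P;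
  the weights are at most 2^(-k) when l(P) = 2^k l(Q0) with k >= 1, so summing over the scales
  yields the constant (2^d - 1) (8/3)^d.
\<close>

section \<open>Infinite sums of extended nonnegative reals\<close>

text \<open>Through coercion inference, the library's summable_on_ennreal only covers functions of the
  form ennreal_of_enat o f.\<close>

lemma ennreal_summable_on [simp]: "(f :: 'a \<Rightarrow> ennreal) summable_on A"
  by (rule nonneg_summable_on_complete) simp

lemma sum_le_infsum_ennreal:
  fixes g :: "'a \<Rightarrow> ennreal"
  assumes "finite F" "F \<subseteq> A"
  shows "sum g F \<le> infsum g A"
  using infsum_mono_neutral[of g F g A] assms by auto

lemma infsum_ennreal_cmult: "(\<Sum>\<^sub>\<infinity>x\<in>A. c * f x) = c * (\<Sum>\<^sub>\<infinity>x\<in>A. f x :: ennreal)"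
  by (simp add: nonneg_infsum_complete sum_distrib_left SUP_mult_left_ennreal)

lemma divide_ennreal_eq_mult: "v > 0 \<Longrightarrow> a / ennreal v = a * ennreal (1 / v)"
  by (simp add: divide_ennreal_def inverse_ennreal inverse_eq_divide)

lemma countable_finite_exhaustion:
  assumes "countable A"
  obtains F :: "nat \<Rightarrow> 'a set"
  where "incseq F" "\<And>n. finite (F n)" "\<And>n. F n \<subseteq> A"
    "\<And>X. finite X \<Longrightarrow> X \<subseteq> A \<Longrightarrow> \<exists>n. X \<subseteq> F n"
proof (cases "A = {}")
  case True
  show ?thesis by (rule that[of "\<lambda>_. {}"]) (use True in auto)
next
  case False
  define F where "F n = from_nat_into A ` {..<n}" for n
  show ?thesis
  proof (rule that[of F])
    show "incseq F" unfolding F_def incseq_def by auto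
    show "finite (F n)" for n unfolding F_def by auto
    show "F n \<subseteq> A" for n unfolding F_def using False by (auto intro: from_nat_into)
    show "\<exists>n. X \<subseteq> F n" if "finite X" "X \<subseteq> A" for X
    proof (intro exI[of _ "Suc (\<Sum>x\<in>X. to_nat_on A x)"] subsetI)
      fix x assume x: "x \<in> X"
      have "to_nat_on A x \<le> (\<Sum>x\<in>X. to_nat_on A x)"
        using that x by (intro member_le_sum) auto
      moreover have "x = from_nat_into A (to_nat_on A x)"
        using x that assms by (simp add: from_nat_into_to_nat_on subsetD)
      ultimately show "x \<in> F (Suc (\<Sum>x\<in>X. to_nat_on A x))"
        unfolding F_def by (auto intro!: image_eqI[of x])
    qed
  qed
qed

lemma infsum_ennreal_eq_SUP_exhaustion:
  fixes g :: "'a \<Rightarrow> ennreal"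
  assumes "\<And>n. finite (F n)" "\<And>n. F n \<subseteq> A"
    and "\<And>X. finite X \<Longrightarrow> X \<subseteq> A \<Longrightarrow> \<exists>n. X \<subseteq> F n"
  shows "infsum g A = (SUP n. sum g (F n))"
proof -
  have "infsum g A = (SUP X\<in>{X. finite X \<and> X \<subseteq> A}. sum g X)"
    by (rule nonneg_infsum_complete) auto
  also have "\<dots> = (SUP n. sum g (F n))"
  proof (rule antisym)
    show "(SUP X\<in>{X. finite X \<and> X \<subseteq> A}. sum g X) \<le> (SUP n. sum g (F n))"
    proof (rule SUP_least)
      fix X assume "X \<in> {X. finite X \<and> X \<subseteq> A}"
      then obtain n where "X \<subseteq> F n" using assms(3) by blast
      then have "sum g X \<le> sum g (F n)" using assms(1) by (intro sum_mono2) auto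
      also have "\<dots> \<le> (SUP n. sum g (F n))" by (rule SUP_upper) auto
      finally show "sum g X \<le> (SUP n. sum g (F n))" .
    qed
    show "(SUP n. sum g (F n)) \<le> (SUP X\<in>{X. finite X \<and> X \<subseteq> A}. sum g X)"
      by (rule SUP_least, rule SUP_upper) (use assms in auto)
  qed
  finally show ?thesis .
qed

lemma
  fixes f :: "'a \<Rightarrow> 'b \<Rightarrow> ennreal"
  assumes "countable A" "\<And>a. a \<in> A \<Longrightarrow> f a \<in> borel_measurable M"
  shows borel_measurable_infsum_ennreal: "(\<lambda>x. \<Sum>\<^sub>\<infinity>a\<in>A. f a x) \<in> borel_measurable M"
    and nn_integral_infsum: "(\<integral>\<^sup>+ x. (\<Sum>\<^sub>\<infinity>a\<in>A. f a x) \<partial>M) = (\<Sum>\<^sub>\<infinity>a\<in>A. \<integral>\<^sup>+ x. f a x \<partial>M)"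
proof -
  obtain F where F: "incseq F" "\<And>n. finite (F n)" "\<And>n. F n \<subseteq> A"
    "\<And>X. finite X \<Longrightarrow> X \<subseteq> A \<Longrightarrow> \<exists>n. X \<subseteq> F n"
    using countable_finite_exhaustion[OF assms(1)] by metis
  have SUP_eq: "infsum h A = (SUP n. sum h (F n))" for h :: "'a \<Rightarrow> ennreal"
    by (rule infsum_ennreal_eq_SUP_exhaustion) (use F in auto)
  have meas: "(\<lambda>x. \<Sum>a\<in>F n. f a x) \<in> borel_measurable M" for n
    using F(3) assms(2) by (intro borel_measurable_sum) auto
  show "(\<lambda>x. \<Sum>\<^sub>\<infinity>a\<in>A. f a x) \<in> borel_measurable M"
    unfolding SUP_eq using meas by measurable
  have inc: "incseq (\<lambda>n x. \<Sum>a\<in>F n. f a x)"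
    using F(1,2) unfolding incseq_def le_fun_def by (auto intro!: sum_mono2)
  have "(\<integral>\<^sup>+ x. (\<Sum>\<^sub>\<infinity>a\<in>A. f a x) \<partial>M) = (SUP n. \<integral>\<^sup>+ x. (\<Sum>a\<in>F n. f a x) \<partial>M)"
    unfolding SUP_eq using nn_integral_monotone_convergence_SUP[OF inc meas]
    by (simp add: image_comp)
  also have "\<dots> = (SUP n. \<Sum>a\<in>F n. \<integral>\<^sup>+ x. f a x \<partial>M)"
    using F(2,3) assms(2) by (intro SUP_cong refl nn_integral_sum) auto
  also have "\<dots> = (\<Sum>\<^sub>\<infinity>a\<in>A. \<integral>\<^sup>+ x. f a x \<partial>M)"
    by (rule SUP_eq[symmetric])
  finally show "(\<integral>\<^sup>+ x. (\<Sum>\<^sub>\<infinity>a\<in>A. f a x) \<partial>M) = (\<Sum>\<^sub>\<infinity>a\<in>A. \<integral>\<^sup>+ x. f a x \<partial>M)" .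
qed

lemma infsum_ennreal_pair_le_iterated:
  fixes f :: "'a \<times> 'b \<Rightarrow> ennreal"
  shows "(\<Sum>\<^sub>\<infinity>p. f p) \<le> (\<Sum>\<^sub>\<infinity>a. \<Sum>\<^sub>\<infinity>b. f (a, b))"
proof -
  have "sum f X \<le> (\<Sum>\<^sub>\<infinity>a. \<Sum>\<^sub>\<infinity>b. f (a, b))" if X: "finite X" for X
  proof -
    have "sum f X \<le> sum f (fst ` X \<times> snd ` X)"
      using X by (intro sum_mono2) force+
    also have "\<dots> = (\<Sum>a\<in>fst ` X. \<Sum>b\<in>snd ` X. f (a, b))"
      by (simp add: sum.cartesian_product)
    also have "\<dots> \<le> (\<Sum>a\<in>fst ` X. \<Sum>\<^sub>\<infinity>b. f (a, b))"
      using X by (intro sum_mono sum_le_infsum_ennreal) auto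
    also have "\<dots> \<le> (\<Sum>\<^sub>\<infinity>a. \<Sum>\<^sub>\<infinity>b. f (a, b))"
      using X by (intro sum_le_infsum_ennreal) auto
    finally show ?thesis .
  qed
  then show ?thesis
    by (subst nonneg_infsum_complete) (auto intro: SUP_least)
qed

lemma infsum_ennreal_le_card_mult:
  fixes h :: "'a \<Rightarrow> real"
  assumes "finite T" "card T \<le> N" "\<And>x. x \<notin> T \<Longrightarrow> h x = 0" "\<And>x. h x \<le> B"
  shows "(\<Sum>\<^sub>\<infinity>x. ennreal (h x)) \<le> ennreal (real N * B)"
proof -
  have "(\<Sum>\<^sub>\<infinity>x. ennreal (h x)) \<le> (\<Sum>\<^sub>\<infinity>x\<in>T. ennreal B)"
    by (rule infsum_mono_neutral) (simp_all add: assms ennreal_leI)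
  also have "\<dots> = of_nat (card T) * ennreal B" using assms(1) by simp
  also have "\<dots> \<le> ennreal (real N * B)"
    using assms(2) by (cases "B \<ge> 0")
      (simp_all add: ennreal_of_nat_eq_real_of_nat ennreal_mult[symmetric] ennreal_leI
        mult_right_mono ennreal_neg)
  finally show ?thesis .
qed

lemma infsum_ennreal_sums:
  assumes "f sums s" "\<And>n. f n \<ge> 0"
  shows "(\<Sum>\<^sub>\<infinity>n. ennreal (f n)) = ennreal s"
proof -
  have "(f has_sum s) UNIV" by (rule sums_nonneg_imp_has_sum) fact+
  then have "infsum f UNIV = s" "f summable_on UNIV" by (auto intro: infsumI simp: summable_on_def)
  moreover have "sum (ennreal \<circ> f) F = ennreal (sum f F)" for F
    using assms(2) by (simp add: sum_ennreal)
  ultimately show ?thesis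
    using infsum_comm_additive_general[of UNIV ennreal f] by (simp add: comp_def)
qed

lemma infsum_ennreal_geometric_int:
  fixes x :: real and N :: int
  assumes "0 \<le> x" "x < 1"
  shows "(\<Sum>\<^sub>\<infinity>J::int. ennreal (if J < N then x ^ nat (N - J) else 0)) = ennreal (x / (1 - x))"
proof -
  define h where "h k = N - 1 - int k" for k :: nat
  have "inj h" unfolding h_def inj_def by simp
  have range_h: "range h = {J. J < N}"
  proof (intro set_eqI iffI)
    fix J assume "J \<in> {J. J < N}"
    then have "J = h (nat (N - 1 - J))" unfolding h_def by simp
    then show "J \<in> range h" by blast
  qed (auto simp: h_def)
  have "(\<Sum>\<^sub>\<infinity>J::int. ennreal (if J < N then x ^ nat (N - J) else 0))
      = (\<Sum>\<^sub>\<infinity>J\<in>range h. ennreal (if J < N then x ^ nat (N - J) else 0))"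
    unfolding range_h by (intro infsum_cong_neutral) auto
  also have "\<dots> = (\<Sum>\<^sub>\<infinity>k. ennreal (if h k < N then x ^ nat (N - h k) else 0))"
    by (simp only: infsum_reindex[OF \<open>inj h\<close>] comp_def)
  also have "\<dots> = (\<Sum>\<^sub>\<infinity>k. ennreal (x ^ Suc k))"
    by (intro infsum_cong) (simp add: h_def nat_add_distrib)
  also have "\<dots> = ennreal (x / (1 - x))"
  proof (rule infsum_ennreal_sums)
    show "(\<lambda>k. x ^ Suc k) sums (x / (1 - x))"
      using sums_mult[OF geometric_sums[of x], of x] assms by simp
  qed (use assms in simp)
  finally show ?thesis .
qed

section \<open>Counting lattice cubes\<close>

lemma card_int_vec_box_le:
  fixes T :: "'n::finite \<Rightarrow> int set"
  assumes "\<And>i. finite (T i)" "\<And>i. card (T i) \<le> N"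
  shows "finite {m::int^'n. \<forall>i. m$i \<in> T i}" "card {m::int^'n. \<forall>i. m$i \<in> T i} \<le> N ^ CARD('n)"
proof -
  have eq: "{m::int^'n. \<forall>i. m$i \<in> T i} = vec_lambda ` (PiE UNIV T)"
  proof (intro set_eqI iffI)
    fix m :: "int^'n" assume "m \<in> {m::int^'n. \<forall>i. m$i \<in> T i}"
    then show "m \<in> vec_lambda ` (PiE UNIV T)"
      by (intro image_eqI[of _ _ "vec_nth m"]) (auto simp: vec_nth_inverse)
  qed auto
  have fin: "finite (PiE UNIV T)" using assms(1) by (intro finite_PiE) auto
  show "finite {m::int^'n. \<forall>i. m$i \<in> T i}" unfolding eq using fin by simp
  have "card {m::int^'n. \<forall>i. m$i \<in> T i} \<le> card (PiE UNIV T)"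
    unfolding eq by (rule card_image_le[OF fin])
  also have "\<dots> = (\<Prod>i\<in>UNIV. card (T i))" by (rule card_PiE) auto
  also have "\<dots> \<le> (\<Prod>i\<in>(UNIV::'n set). N)" by (intro prod_mono) (use assms in auto)
  finally show "card {m::int^'n. \<forall>i. m$i \<in> T i} \<le> N ^ CARD('n)" by simp
qed

lemma
  fixes c :: "real^'n::finite" and L W :: real and Q :: "'n cube"
  assumes L: "L > 0" and N: "snd Q + W \<le> real N * L"
  defines "S \<equiv> {m::int^'n. cube_set (L *\<^sub>R (\<chi> i. real_of_int (m$i)) + c, W) \<inter> cube_set Q \<noteq> {}}"
  shows finite_lattice_cubes_meeting_cube: "finite S"
    and card_lattice_cubes_meeting_cube_le: "card S \<le> N ^ CARD('n)"
proof -
  define u where "u i = (fst Q $ i - c$i - W) / L" for i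
  define T where "T i = {\<lfloor>u i\<rfloor> + 1 .. \<lfloor>u i\<rfloor> + int N}" for i
  have "m$i \<in> T i" if "m \<in> S" for m i
  proof -
    obtain x where x: "L * m$i + c$i \<le> x$i" "x$i < L * m$i + c$i + W"
        "fst Q $ i \<le> x$i" "x$i < fst Q $ i + snd Q"
      using \<open>m \<in> S\<close> unfolding S_def cube_set_def by auto
    have "u i < m$i"
      using x(2,3) L unfolding u_def by (simp add: divide_less_eq mult.commute)
    moreover have "m$i < u i + N"
      using x(1,4) N L unfolding u_def by (simp add: field_simps)
    ultimately show ?thesis unfolding T_def by auto linarith+
  qed
  then have sub: "S \<subseteq> {m::int^'n. \<forall>i. m$i \<in> T i}" by blast
  note box = card_int_vec_box_le[of T N]
  show "finite S" using box sub unfolding T_def by (auto intro: finite_subset)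
  show "card S \<le> N ^ CARD('n)" using box sub unfolding T_def by (auto intro: card_mono order_trans)
qed

section \<open>Dyadic grids\<close>

lemma grid_shift_coarser:
  assumes "J0 \<le> J"
  obtains t :: int where "grid_shift \<omega> J0 $ i = grid_shift \<omega> J $ i + 2 powr (- real_of_int J) * t"
proof -
  obtain n where n: "J = J0 + int n" using assms by (metis zle_iff_zadd)
  define a where
    "a k = (if \<omega> (J0 + 1 + int k) i then 1 else 0) * (2::real) powr (- real_of_int (J0 + 1 + int k))"
    for k :: nat
  have a_le: "norm (a k) \<le> 2 powr (- real_of_int (J0 + 1)) * (1/2)^k" for k
  proof -
    have "(2::real) powr (- real k) = (1/2)^k"
      by (simp add: powr_minus powr_realpow power_one_over inverse_eq_divide)
    moreover have "(2::real) powr (- real_of_int (J0 + 1 + int k))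
        = 2 powr (- real_of_int (J0 + 1) + - real k)"
      by simp
    ultimately have "(2::real) powr (- real_of_int (J0 + 1 + int k))
        = 2 powr (- real_of_int (J0 + 1)) * (1/2)^k"
      by (simp only: powr_add)
    then show ?thesis unfolding a_def by auto
  qed
  have "summable a"
    by (rule summable_comparison_test'[OF summable_mult[OF summable_geometric] a_le]) auto
  then have "suminf a = (\<Sum>k. a (k + n)) + sum a {..<n}"
    by (rule suminf_split_initial_segment)
  moreover have "grid_shift \<omega> J0 $ i = suminf a" "grid_shift \<omega> J $ i = (\<Sum>k. a (k + n))"
    unfolding grid_shift_def a_def n by (simp_all add: algebra_simps)
  moreover have "a k = 2 powr (- real_of_int J) * (if \<omega> (J0 + 1 + int k) i then 2 ^ (n - 1 - k) else 0)"
    if "k < n" for k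
  proof -
    have "- real_of_int (J0 + 1 + int k) = - real_of_int J + real (n - 1 - k)"
      using that unfolding n by (simp add: of_nat_diff)
    then have "(2::real) powr (- real_of_int (J0 + 1 + int k)) = 2 powr (- real_of_int J) * 2 ^ (n - 1 - k)"
      by (simp only: powr_add) (simp add: powr_realpow)
    then show ?thesis unfolding a_def by simp
  qed
  then have "sum a {..<n}
      = 2 powr (- real_of_int J) * of_int (\<Sum>k<n. if \<omega> (J0 + 1 + int k) i then 2 ^ (n - 1 - k) else 0)"
    unfolding of_int_sum sum_distrib_left by (intro sum.cong) auto
  ultimately show ?thesis
    by (intro that[of "\<Sum>k<n. if \<omega> (J0 + 1 + int k) i then 2 ^ (n - 1 - k) else 0"]) simp
qed

definition grid_cube :: "(int \<Rightarrow> 'n::finite \<Rightarrow> bool) \<Rightarrow> int \<Rightarrow> int^'n \<Rightarrow> 'n cube" where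
  "grid_cube \<omega> J m =
     (2 powr (- real_of_int J) *\<^sub>R (\<chi> i. real_of_int (m $ i)) + grid_shift \<omega> J, 2 powr (- real_of_int J))"

lemma snd_grid_cube [simp]: "snd (grid_cube \<omega> J m) = 2 powr (- real_of_int J)"
  unfolding grid_cube_def by simp

lemma dyadic_grid_eq_range: "dyadic_grid \<omega> = range (\<lambda>(J, m). grid_cube \<omega> J m)"
  unfolding dyadic_grid_def grid_cube_def by auto

lemma countable_dyadic_grid: "countable (dyadic_grid \<omega>)"
  unfolding dyadic_grid_eq_range by simp

lemma inj_grid_cube: "inj (\<lambda>(J, m). grid_cube \<omega> J m)"
proof (rule injI, clarsimp)
  fix J m J' m' assume eq: "grid_cube \<omega> J m = grid_cube \<omega> J' m'"
  then have "(2::real) powr (- real_of_int J) = 2 powr (- real_of_int J')"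
    by (metis snd_grid_cube)
  then have J: "J = J'" by (simp add: powr_inj)
  with eq have "(\<chi> i. real_of_int (m $ i)) = (\<chi> i. real_of_int (m' $ i))"
    unfolding grid_cube_def by simp
  then have "m = m'" by (metis (mono_tags, lifting) of_int_eq_iff vec_eq_iff vec_lambda_beta)
  with J show "J = J' \<and> m = m'" by simp
qed

lemma half_power_mult_powr:
  "(1/2::real)^j * 2 powr (- real_of_int J) = 2 powr (- real_of_int (J + int j))"
proof -
  have "(1/2::real)^j = 2 powr (- real j)"
    by (simp add: powr_minus powr_realpow power_one_over inverse_eq_divide)
  then show ?thesis by (simp add: powr_add[symmetric] algebra_simps)
qed

lemma mem_cube_set_grid_cube:
  "x \<in> cube_set (grid_cube \<omega> J m) \<longleftrightarrow>
   (\<forall>i. 2 powr (- real_of_int J) * m$i + grid_shift \<omega> J $ i \<le> x$i \<and>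
        x$i < 2 powr (- real_of_int J) * (m$i + 1) + grid_shift \<omega> J $ i)"
  unfolding cube_set_def grid_cube_def by (simp add: algebra_simps)

lemma lattice_intervals_nested:
  fixes L a x y :: real and m M :: int and n :: nat
  assumes L: "L > 0"
    and x: "L * m + a \<le> x" "x < L * (m + 1) + a" "L * M + a \<le> x" "x < L * (M + 2^n) + a"
    and y: "L * m + a \<le> y" "y < L * (m + 1) + a"
  shows "L * M + a \<le> y \<and> y < L * (M + 2^n) + a"
proof -
  have "L * M < L * (m + 1)" "L * m < L * (M + 2^n)" using x by linarith+
  then have "M \<le> m" "m + 1 \<le> M + 2^n" using L by (simp_all only: mult_less_cancel_left_pos of_int_less_iff)
  then have "L * M \<le> L * m" "L * (m + 1) \<le> L * (M + 2^n)"
    using L by (simp_all only: mult_le_cancel_left_pos of_int_le_iff)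
  with y show ?thesis by linarith
qed

lemma grid_cube_nested:
  assumes "J0 \<le> J" "cube_set (grid_cube \<omega> J m) \<inter> cube_set (grid_cube \<omega> J0 m0) \<noteq> {}"
  shows "cube_set (grid_cube \<omega> J m) \<subseteq> cube_set (grid_cube \<omega> J0 m0)"
proof
  obtain n where n: "J = J0 + int n" using assms by (metis zle_iff_zadd)
  define L where "L = (2::real) powr (- real_of_int J)"
  have L: "L > 0" unfolding L_def by simp
  have side0: "(2::real) powr (- real_of_int J0) = L * 2^n"
    unfolding L_def n by (simp add: powr_add[symmetric] powr_realpow[symmetric])
  obtain x where x: "x \<in> cube_set (grid_cube \<omega> J m)" "x \<in> cube_set (grid_cube \<omega> J0 m0)"
    using assms by blast
  fix y assume y: "y \<in> cube_set (grid_cube \<omega> J m)"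
  have "2 powr (- real_of_int J0) * m0$i + grid_shift \<omega> J0 $ i \<le> y$i \<and>
        y$i < 2 powr (- real_of_int J0) * (m0$i + 1) + grid_shift \<omega> J0 $ i" for i
  proof -
    obtain t :: int where t: "grid_shift \<omega> J0 $ i = grid_shift \<omega> J $ i + L * t"
      using grid_shift_coarser[OF assms(1)] unfolding L_def by blast
    define M where "M = m0$i * 2^n + t"
    have lo: "2 powr (- real_of_int J0) * m0$i + grid_shift \<omega> J0 $ i = L * M + grid_shift \<omega> J $ i"
      and hi: "2 powr (- real_of_int J0) * (m0$i + 1) + grid_shift \<omega> J0 $ i = L * (M + 2^n) + grid_shift \<omega> J $ i"
      unfolding M_def side0 t by (simp_all add: algebra_simps)
    have "L * m$i + grid_shift \<omega> J $ i \<le> z$i \<and> z$i < L * (m$i + 1) + grid_shift \<omega> J $ i"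
      if "z \<in> cube_set (grid_cube \<omega> J m)" for z
      using that unfolding mem_cube_set_grid_cube L_def by blast
    moreover have "L * M + grid_shift \<omega> J $ i \<le> x$i \<and> x$i < L * (M + 2^n) + grid_shift \<omega> J $ i"
      using x(2) unfolding mem_cube_set_grid_cube lo[symmetric] hi[symmetric] by blast
    ultimately show ?thesis
      unfolding lo hi using x(1) y by (meson lattice_intervals_nested[OF L])
  qed
  then show "y \<in> cube_set (grid_cube \<omega> J0 m0)" unfolding mem_cube_set_grid_cube by blast
qed

lemma dyadic_grid_cube_cases:
  assumes Q0: "Q0 \<in> dyadic_grid \<omega>" and P: "P \<in> dyadic_grid \<omega>"
  obtains (disjoint) "cube_set P \<inter> cube_set Q0 = {}"
    | (inside) "cube_set P \<subseteq> cube_set Q0"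
    | (far) "cube_set P \<inter> cube_set Q0 \<noteq> {}" "2 * snd Q0 \<le> snd P"
proof -
  obtain J0 m0 where Q0m: "Q0 = grid_cube \<omega> J0 m0" using Q0 by (auto simp: dyadic_grid_eq_range)
  obtain J m where Pm: "P = grid_cube \<omega> J m" using P by (auto simp: dyadic_grid_eq_range)
  show ?thesis
  proof (cases "J0 \<le> J")
    case True
    then show ?thesis using grid_cube_nested[of J0 J] that unfolding Q0m Pm by blast
  next
    case False
    then have "(2::real) powr (- real_of_int (J0 - 1)) \<le> 2 powr (- real_of_int J)" by simp
    then have "2 * snd Q0 \<le> snd P"
      unfolding Q0m Pm by (simp add: powr_diff powr_minus divide_inverse)
    then show ?thesis using that by blast
  qed
qed

lemma inj_grid_cube_scale: "inj (grid_cube \<omega> J)"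
  using inj_grid_cube[of \<omega>] unfolding inj_def by auto

lemma two_powr_div_eq_half_power:
  assumes "J \<le> J0"
  shows "(2::real) powr (- real_of_int J0) / 2 powr (- real_of_int J) = (1/2) ^ nat (J0 - J)"
proof -
  have "- real (nat (J0 - J)) = - real_of_int J0 - (- real_of_int J)" using assms by simp
  then have "(2::real) powr (- real_of_int J0) / 2 powr (- real_of_int J) = 2 powr (- real (nat (J0 - J)))"
    by (simp only: powr_diff)
  then show ?thesis by (simp add: powr_minus powr_realpow power_one_over inverse_eq_divide)
qed

lemma
  fixes Q :: "'n::finite cube"
  assumes "snd Q \<le> 2 powr (- real_of_int J)"
  shows finite_grid_cubes_meeting: "finite {m. cube_set (grid_cube \<omega> J m) \<inter> cube_set Q \<noteq> {}}"
    and card_grid_cubes_meeting_le: "card {m. cube_set (grid_cube \<omega> J m) \<inter> cube_set Q \<noteq> {}} \<le> 2^CARD('n)"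
    and finite_triples_meeting: "finite {m. cube_set (triple (grid_cube \<omega> J m)) \<inter> cube_set Q \<noteq> {}}"
    and card_triples_meeting_le: "card {m. cube_set (triple (grid_cube \<omega> J m)) \<inter> cube_set Q \<noteq> {}} \<le> 4^CARD('n)"
proof -
  define S where "S = (2::real) powr (- real_of_int J)"
  have S: "S > 0" unfolding S_def by simp
  have cubes: "{m. cube_set (grid_cube \<omega> J m) \<inter> cube_set Q \<noteq> {}}
      = {m. cube_set (S *\<^sub>R (\<chi> i. real_of_int (m$i)) + grid_shift \<omega> J, S) \<inter> cube_set Q \<noteq> {}}"
    unfolding grid_cube_def S_def ..
  have triples: "{m. cube_set (triple (grid_cube \<omega> J m)) \<inter> cube_set Q \<noteq> {}}
      = {m. cube_set (S *\<^sub>R (\<chi> i. real_of_int (m$i)) + (grid_shift \<omega> J - (\<chi> i. S)), 3 * S) \<inter> cube_set Q \<noteq> {}}"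
    unfolding triple_def grid_cube_def S_def by (simp add: algebra_simps)
  have "snd Q + S \<le> real 2 * S" "snd Q + 3 * S \<le> real 4 * S" using assms by (simp_all add: S_def)
  then show "finite {m. cube_set (grid_cube \<omega> J m) \<inter> cube_set Q \<noteq> {}}"
    "card {m. cube_set (grid_cube \<omega> J m) \<inter> cube_set Q \<noteq> {}} \<le> 2^CARD('n)"
    "finite {m. cube_set (triple (grid_cube \<omega> J m)) \<inter> cube_set Q \<noteq> {}}"
    "card {m. cube_set (triple (grid_cube \<omega> J m)) \<inter> cube_set Q \<noteq> {}} \<le> 4^CARD('n)"
    unfolding cubes triples
    using finite_lattice_cubes_meeting_cube[OF S] card_lattice_cubes_meeting_cube_le[OF S] by blast+
qed

section \<open>Haar coefficients and averages\<close>

lemma sets_lborel_cube_set [measurable]: "cube_set Q \<in> sets lborel"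
proof -
  have "Measurable.pred lborel (\<lambda>x::real^'a. \<forall>i. fst Q $ i \<le> x $ i \<and> x $ i < fst Q $ i + snd Q)"
    by measurable
  then show ?thesis unfolding cube_set_def Measurable.pred_def by simp
qed

lemma emeasure_cube_set_le:
  fixes Q :: "'n::finite cube"
  assumes "snd Q \<ge> 0"
  shows "emeasure lborel (cube_set Q) \<le> ennreal (vol Q)"
proof -
  define b where "b = fst Q + (\<chi> i. snd Q)"
  have sub: "cube_set Q \<subseteq> cbox (fst Q) b"
    unfolding cube_set_def b_def by (auto simp: mem_box_cart less_imp_le)
  have "fst Q \<in> cbox (fst Q) b" using assms unfolding b_def by (auto simp: mem_box_cart)
  then have "cbox (fst Q) b \<noteq> {}" by blast
  then have "measure lborel (cbox (fst Q) b) = vol Q"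
    by (subst content_cbox_cart) (simp_all add: b_def vol_def)
  then have "emeasure lborel (cbox (fst Q) b) = ennreal (vol Q)"
    using emeasure_eq_ennreal_measure[of lborel "cbox (fst Q) b"] emeasure_lborel_cbox_finite[of "fst Q" b]
    by simp
  with emeasure_mono[OF sub, of lborel] show ?thesis by simp
qed

lemma emeasure_cube_set_diff_le:
  fixes Q :: "'n::finite cube"
  assumes "snd Q \<ge> 0"
  shows "emeasure lborel (cube_set Q - A) \<le> ennreal (vol Q)"
  using emeasure_mono[of "cube_set Q - A" "cube_set Q" lborel] emeasure_cube_set_le[OF assms]
    sets_lborel_cube_set[of Q]
  by (auto intro: order.trans)

lemma vol_triple: "vol (triple Q) = 3^CARD('n) * vol Q" for Q :: "'n::finite cube"
  unfolding vol_def triple_def by (simp add: power_mult_distrib)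

lemma integrable_bounded_supported_cube:
  fixes f :: "real^'n::finite \<Rightarrow> real"
  assumes "f \<in> borel_measurable lborel" "AE x in lborel. \<bar>f x\<bar> \<le> M"
    "\<And>x. x \<notin> cube_set Q \<Longrightarrow> f x = 0" "snd Q \<ge> 0"
  shows "integrable lborel f"
proof (rule Bochner_Integration.integrable_bound)
  have "emeasure lborel (cube_set Q) < \<infinity>"
    using emeasure_cube_set_le[OF assms(4)] by (simp add: le_less_trans)
  then show "integrable lborel (\<lambda>x. indicator (cube_set Q) x * M)"
    using sets_lborel_cube_set[of Q] by (intro integrable_mult_left integrable_real_indicator) auto
  show "AE x in lborel. norm (f x) \<le> norm (indicator (cube_set Q) x * M)"
    using assms(2) by eventually_elim (use assms(3) in \<open>auto simp: indicator_def\<close>)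
qed fact

lemma borel_measurable_haar [measurable]: "haar P \<epsilon> \<in> borel_measurable lborel"
  unfolding haar_def haar1_def by measurable

lemma haar_eq_0_outside:
  assumes "snd P > 0" "x \<notin> cube_set P"
  shows "haar P \<epsilon> x = 0"
proof -
  obtain i where "x $ i \<notin> {fst P $ i..<fst P $ i + snd P}"
    using assms(2) unfolding cube_set_def by auto
  then have "haar1 (\<epsilon> i) (fst P $ i) (snd P) (x $ i) = 0"
    using assms(1) unfolding haar1_def by (auto simp: indicator_def)
  then show ?thesis unfolding haar_def by (intro prod_zero) auto
qed

lemma abs_haar_le:
  fixes P :: "'n::finite cube"
  assumes "snd P > 0"
  shows "\<bar>haar P \<epsilon> x\<bar> \<le> 1 / sqrt (vol P)"
proof -
  have "\<bar>haar P \<epsilon> x\<bar> = (\<Prod>i\<in>UNIV. \<bar>haar1 (\<epsilon> i) (fst P $ i) (snd P) (x $ i)\<bar>)"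
    unfolding haar_def by (simp add: abs_prod)
  also have "\<dots> \<le> (\<Prod>i\<in>(UNIV::'n set). snd P powr (-1/2))"
    using assms by (intro prod_mono) (auto simp: haar1_def indicator_def)
  also have "\<dots> = 1 / sqrt (vol P)"
    using assms by (simp add: vol_def powr_minus_divide powr_half_sqrt real_sqrt_power power_one_over)
  finally show ?thesis .
qed

lemma haar_coeff_sq_le:
  fixes f :: "real^'n::finite \<Rightarrow> real"
  assumes f: "integrable lborel f" and P: "snd P > 0"
  shows "(\<integral>x. f x * haar P \<epsilon> x \<partial>lborel)^2 \<le> (\<integral>x. \<bar>f x\<bar> \<partial>lborel)^2 / vol P"
proof -
  define c where "c = 1 / sqrt (vol P)"
  have vol: "vol P > 0" using P unfolding vol_def by simp
  have bound: "norm (f x * haar P \<epsilon> x) \<le> \<bar>f x\<bar> * c" for x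
  proof -
    have "\<bar>haar P \<epsilon> x\<bar> \<le> c" using abs_haar_le[OF P] unfolding c_def .
    then show ?thesis by (simp add: abs_mult mult_left_mono)
  qed
  have c: "c \<ge> 0" unfolding c_def using vol by simp
  have int_bound: "integrable lborel (\<lambda>x. \<bar>f x\<bar> * c)" using f by auto
  have int_coeff: "integrable lborel (\<lambda>x. f x * haar P \<epsilon> x)"
  proof (rule Bochner_Integration.integrable_bound[OF int_bound])
    show "(\<lambda>x. f x * haar P \<epsilon> x) \<in> borel_measurable lborel" using f by measurable
    show "AE x in lborel. norm (f x * haar P \<epsilon> x) \<le> norm (\<bar>f x\<bar> * c)"
      using bound c by (simp add: abs_mult)
  qed
  have "\<bar>\<integral>x. f x * haar P \<epsilon> x \<partial>lborel\<bar> \<le> (\<integral>x. \<bar>f x\<bar> * c \<partial>lborel)"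
    by (rule integral_abs_bound_integral[OF int_coeff int_bound]) (use bound in simp)
  also have "\<dots> = c * (\<integral>x. \<bar>f x\<bar> \<partial>lborel)" by simp
  finally have "\<bar>\<integral>x. f x * haar P \<epsilon> x \<partial>lborel\<bar>^2 \<le> (c * (\<integral>x. \<bar>f x\<bar> \<partial>lborel))^2"
    by (intro power_mono) auto
  then show ?thesis using vol by (simp add: c_def power_mult_distrib power_divide)
qed

lemma card_nonzero_signs_pos: "card {\<epsilon>::'n::finite \<Rightarrow> bool. \<epsilon> \<noteq> (\<lambda>_. False)} > 0"
proof -
  have "(\<lambda>_. True) \<in> {\<epsilon>::'n \<Rightarrow> bool. \<epsilon> \<noteq> (\<lambda>_. False)}" by (simp add: fun_eq_iff)
  moreover have "finite {\<epsilon>::'n \<Rightarrow> bool. \<epsilon> \<noteq> (\<lambda>_. False)}" by simp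
  ultimately show ?thesis using card_gt_0_iff by blast
qed

lemma haar_sq_le:
  fixes f :: "real^'n::finite \<Rightarrow> real" and P :: "'n cube"
  assumes "integrable lborel f" "snd P > 0"
  shows "haar_sq f P \<le> card {\<epsilon>::'n \<Rightarrow> bool. \<epsilon> \<noteq> (\<lambda>_. False)} * (\<integral>x. \<bar>f x\<bar> \<partial>lborel)^2 / vol P"
proof -
  have "haar_sq f P \<le> (\<Sum>\<epsilon>\<in>{\<epsilon>::'n \<Rightarrow> bool. \<epsilon> \<noteq> (\<lambda>_. False)}. (\<integral>x. \<bar>f x\<bar> \<partial>lborel)^2 / vol P)"
    unfolding haar_sq_def using assms by (intro sum_mono haar_coeff_sq_le)
  then show ?thesis by simp
qed

lemma haar_sq_eq_0_if_disjoint: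
  assumes "snd P > 0" "cube_set P \<inter> cube_set Q = {}" "\<And>x. x \<notin> cube_set Q \<Longrightarrow> f x = 0"
  shows "haar_sq f P = 0"
proof -
  have "(\<lambda>x. f x * haar P \<epsilon> x) = (\<lambda>_. 0)" for \<epsilon>
    using assms haar_eq_0_outside[OF assms(1)] by fastforce
  then show ?thesis unfolding haar_sq_def by simp
qed

lemma avg_abs_le_of_supported:
  assumes "\<And>x. x \<notin> cube_set Q0 \<Longrightarrow> u x = 0" "snd Q > 0" "snd Q0 > 0"
  shows "avg_abs u Q \<le> avg_abs u Q0 * ennreal (vol Q0 / vol Q)"
proof -
  have vol: "vol Q > 0" "vol Q0 > 0" using assms(2,3) unfolding vol_def by simp_all
  have "(\<integral>\<^sup>+ x\<in>cube_set Q. ennreal \<bar>u x\<bar> \<partial>lborel) \<le> (\<integral>\<^sup>+ x\<in>cube_set Q0. ennreal \<bar>u x\<bar> \<partial>lborel)"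
    using assms(1) by (intro nn_integral_mono) (auto simp: indicator_def)
  then have "avg_abs u Q \<le> (\<integral>\<^sup>+ x\<in>cube_set Q0. ennreal \<bar>u x\<bar> \<partial>lborel) / ennreal (vol Q)"
    unfolding avg_abs_def by (rule divide_right_mono_ennreal)
  also have "\<dots> = avg_abs u Q0 * ennreal (vol Q0 / vol Q)"
  proof -
    have "ennreal (1 / vol Q) = ennreal (1 / vol Q0) * ennreal (vol Q0 / vol Q)"
      using vol by (subst ennreal_mult[symmetric]) auto
    then show ?thesis
      using vol unfolding avg_abs_def divide_ennreal_eq_mult[OF vol(1)] divide_ennreal_eq_mult[OF vol(2)]
      by (simp only: mult.assoc)
  qed
  finally show ?thesis .
qed

lemma avg_abs_eq_integral:
  assumes "integrable lborel u" "\<And>x. x \<notin> cube_set Q \<Longrightarrow> u x = 0" "snd Q > 0"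
  shows "avg_abs u Q = ennreal ((\<integral>x. \<bar>u x\<bar> \<partial>lborel) / vol Q)"
proof -
  have "(\<integral>\<^sup>+ x\<in>cube_set Q. ennreal \<bar>u x\<bar> \<partial>lborel) = (\<integral>\<^sup>+ x. ennreal \<bar>u x\<bar> \<partial>lborel)"
    using assms(2) by (intro nn_integral_cong) (auto simp: indicator_def)
  also have "\<dots> = ennreal (\<integral>x. \<bar>u x\<bar> \<partial>lborel)"
    using assms(1) by (intro nn_integral_eq_integral) auto
  finally show ?thesis
    using assms(3) unfolding avg_abs_def vol_def by (simp add: divide_ennreal)
qed

lemma haar_sq_div_vol_le:
  fixes f :: "real^'n::finite \<Rightarrow> real" and Q0 P :: "'n cube"
  assumes f: "integrable lborel f" "\<And>x. x \<notin> cube_set Q0 \<Longrightarrow> f x = 0" and pos: "snd Q0 > 0" "snd P > 0"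
  shows "ennreal (haar_sq f P / vol P)
    \<le> ennreal (card {\<epsilon>::'n \<Rightarrow> bool. \<epsilon> \<noteq> (\<lambda>_. False)}) * (avg_abs f Q0)^2 * ennreal ((vol Q0 / vol P)^2)"
proof -
  define N where "N = real (card {\<epsilon>::'n \<Rightarrow> bool. \<epsilon> \<noteq> (\<lambda>_. False)})"
  define F where "F = (\<integral>x. \<bar>f x\<bar> \<partial>lborel) / vol Q0"
  have vol: "vol Q0 > 0" "vol P > 0" using pos unfolding vol_def by simp_all
  have "haar_sq f P \<le> N * (F * vol Q0)^2 / vol P"
    using haar_sq_le[OF f(1) pos(2)] vol unfolding N_def F_def by simp
  then have "haar_sq f P / vol P \<le> N * (F * vol Q0)^2 / vol P / vol P"
    using vol(2) by (rule divide_right_mono[OF _ less_imp_le])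
  also have "\<dots> = N * F^2 * (vol Q0 / vol P)^2"
    using vol by (simp add: field_simps power2_eq_square)
  finally have "ennreal (haar_sq f P / vol P) \<le> ennreal (N * F^2 * (vol Q0 / vol P)^2)"
    by (rule ennreal_leI)
  also have "\<dots> = ennreal N * ennreal F ^ 2 * ennreal ((vol Q0 / vol P)^2)"
    using vol by (simp add: N_def F_def ennreal_mult' ennreal_power)
  also have "ennreal F = avg_abs f Q0"
    unfolding F_def using f pos by (intro avg_abs_eq_integral[symmetric]) auto
  finally show ?thesis unfolding N_def .
qed

section \<open>The part of the form outside the cube\<close>

definition triple_subcubes :: "(int \<Rightarrow> 'n::finite \<Rightarrow> bool) \<Rightarrow> nat \<Rightarrow> 'n cube \<Rightarrow> 'n cube set" where
  "triple_subcubes \<omega> j K =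
     {P \<in> dyadic_grid \<omega>. cube_set P \<subseteq> cube_set (triple K) \<and> side P = (1/2)^j * side K}"

lemma B_out_eq_infsum:
  "B_out \<omega> j Q0 g f =
     (\<Sum>\<^sub>\<infinity>K\<in>dyadic_grid \<omega>. avg_abs g (triple K) *
        (\<Sum>\<^sub>\<infinity>P\<in>triple_subcubes \<omega> j K.
           ennreal (haar_sq f P / vol P) * emeasure lborel (cube_set P - cube_set Q0)))"
proof -
  define G where "G K x = (\<Sum>\<^sub>\<infinity>P\<in>triple_subcubes \<omega> j K.
      ennreal (haar_sq f P / vol P) * indicator (cube_set P - cube_set Q0) x)" for K x
  have countable: "countable (triple_subcubes \<omega> j K)" for K
    using countable_dyadic_grid by (rule countable_subset[rotated]) (auto simp: triple_subcubes_def)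
  have G_measurable: "G K \<in> borel_measurable lborel" for K
    unfolding G_def by (rule borel_measurable_infsum_ennreal[OF countable]) measurable
  have G_integral: "(\<integral>\<^sup>+ x. G K x \<partial>lborel) = (\<Sum>\<^sub>\<infinity>P\<in>triple_subcubes \<omega> j K.
      ennreal (haar_sq f P / vol P) * emeasure lborel (cube_set P - cube_set Q0))" for K
    unfolding G_def
    by (subst nn_integral_infsum[OF countable])
      (measurable, intro infsum_cong nn_integral_cmult_indicator, measurable)
  have "B_out \<omega> j Q0 g f = (\<integral>\<^sup>+ x. (\<Sum>\<^sub>\<infinity>K\<in>dyadic_grid \<omega>. avg_abs g (triple K) * G K x) \<partial>lborel)"
    unfolding B_out_def G_def triple_subcubes_def
    by (intro nn_integral_cong) (simp add: indicator_def)
  also have "\<dots> = (\<Sum>\<^sub>\<infinity>K\<in>dyadic_grid \<omega>. \<integral>\<^sup>+ x. avg_abs g (triple K) * G K x \<partial>lborel)"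
    by (rule nn_integral_infsum[OF countable_dyadic_grid]) (use G_measurable in measurable)
  also have "\<dots> = (\<Sum>\<^sub>\<infinity>K\<in>dyadic_grid \<omega>. avg_abs g (triple K) * (\<integral>\<^sup>+ x. G K x \<partial>lborel))"
    by (intro infsum_cong nn_integral_cmult G_measurable)
  finally show ?thesis by (simp only: G_integral)
qed

definition far_weight :: "'n::finite cube \<Rightarrow> 'n cube \<Rightarrow> real" where
  "far_weight Q0 P =
     (if cube_set P \<inter> cube_set Q0 \<noteq> {} \<and> 2 * snd Q0 \<le> snd P then (vol Q0 / vol P)^2 else 0)"

lemma B_out_term_le:
  fixes Q0 K P :: "'n::finite cube"
  assumes Q0: "Q0 \<in> dyadic_grid \<omega>" and K: "K \<in> dyadic_grid \<omega>" and P: "P \<in> triple_subcubes \<omega> j K"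
    and f: "integrable lborel f" "\<And>x. x \<notin> cube_set Q0 \<Longrightarrow> f x = 0"
    and g: "\<And>x. x \<notin> cube_set Q0 \<Longrightarrow> g x = 0"
  shows "avg_abs g (triple K) * (ennreal (haar_sq f P / vol P) * emeasure lborel (cube_set P - cube_set Q0))
    \<le> ennreal (card {\<epsilon>::'n \<Rightarrow> bool. \<epsilon> \<noteq> (\<lambda>_. False)} / 3^CARD('n) * (1/2)^(j * CARD('n)))
       * avg_abs g Q0 * (avg_abs f Q0)^2 * ennreal (vol Q0) * ennreal (far_weight Q0 P)"
    (is "?lhs \<le> ennreal ?c * _ * _ * _ * _")
proof -
  have pos: "snd Q0 > 0" "snd K > 0" "snd P > 0"
    using Q0 K P by (auto simp: dyadic_grid_eq_range triple_subcubes_def)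
  have P_grid: "P \<in> dyadic_grid \<omega>" and side_K: "snd K = 2^j * snd P"
    using P by (auto simp: triple_subcubes_def side_def power_one_over)
  from Q0 P_grid show ?thesis
  proof (cases rule: dyadic_grid_cube_cases)
    case disjoint
    then have "haar_sq f P = 0" using f(2) pos by (intro haar_sq_eq_0_if_disjoint) auto
    then show ?thesis by simp
  next
    case inside
    then have "emeasure lborel (cube_set P - cube_set Q0) = 0" by (metis Diff_eq_empty_iff emeasure_empty)
    then show ?thesis by simp
  next
    case far
    define N where "N = real (card {\<epsilon>::'n \<Rightarrow> bool. \<epsilon> \<noteq> (\<lambda>_. False)})"
    have vol: "vol Q0 > 0" "vol P > 0" "vol (triple K) > 0"
      using pos unfolding vol_triple unfolding vol_def by simp_all
    have "vol (triple K) = 3^CARD('n) * 2^(j * CARD('n)) * vol P"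
      unfolding vol_triple unfolding vol_def side_K by (simp add: power_mult_distrib power_mult)
    then have "vol Q0 / vol (triple K) * N * vol P = ?c * vol Q0"
      using vol unfolding N_def by (simp add: field_simps power_one_over)
    moreover have "0 \<le> vol Q0 / vol (triple K)" "0 \<le> vol Q0 / vol (triple K) * N" "0 \<le> ?c"
      using vol unfolding N_def by simp_all
    ultimately have volumes:
      "ennreal (vol Q0 / vol (triple K)) * ennreal N * ennreal (vol P) = ennreal ?c * ennreal (vol Q0)"
      by (metis ennreal_mult')
    have "avg_abs g (triple K) \<le> avg_abs g Q0 * ennreal (vol Q0 / vol (triple K))"
      using g pos by (intro avg_abs_le_of_supported) (auto simp: triple_def)
    moreover have "ennreal (haar_sq f P / vol P) \<le> ennreal N * (avg_abs f Q0)^2 * ennreal (far_weight Q0 P)"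
      using haar_sq_div_vol_le[OF f pos(1,3)] far unfolding N_def far_weight_def by simp
    moreover have "emeasure lborel (cube_set P - cube_set Q0) \<le> ennreal (vol P)"
      using pos by (intro emeasure_cube_set_diff_le) simp
    ultimately have "?lhs \<le> avg_abs g Q0 * ennreal (vol Q0 / vol (triple K))
        * (ennreal N * (avg_abs f Q0)^2 * ennreal (far_weight Q0 P) * ennreal (vol P))"
      by (intro mult_mono) auto
    also have "\<dots> = (ennreal (vol Q0 / vol (triple K)) * ennreal N * ennreal (vol P))
        * avg_abs g Q0 * (avg_abs f Q0)^2 * ennreal (far_weight Q0 P)"
      by (simp only: mult_ac)
    finally show ?thesis unfolding volumes by (simp only: mult_ac)
  qed
qed

lemma far_weight_le: "far_weight Q0 P \<le> (snd Q0 / snd P) ^ (2 * CARD('n::finite))"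
  for Q0 P :: "'n::finite cube"
proof -
  have "(vol Q0 / vol P)^2 = (snd Q0 / snd P) ^ (2 * CARD('n))"
    unfolding vol_def by (simp add: power_divide power_mult[symmetric] mult.commute)
  moreover have "0 \<le> (snd Q0 / snd P) ^ (2 * CARD('n))" by (simp add: power_mult)
  ultimately show ?thesis unfolding far_weight_def by simp
qed

lemma mem_triple_subcubes_grid_cube:
  "P \<in> triple_subcubes \<omega> j (grid_cube \<omega> J m) \<longleftrightarrow>
     P \<in> range (grid_cube \<omega> (J + int j)) \<and> cube_set P \<subseteq> cube_set (triple (grid_cube \<omega> J m))"
proof -
  have "P \<in> range (grid_cube \<omega> (J + int j))"
    if "P = grid_cube \<omega> J' m'" "snd P = (1/2)^j * 2 powr (- real_of_int J)" for J' m'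
  proof -
    have "(2::real) powr (- real_of_int J') = 2 powr (- real_of_int (J + int j))"
      using that unfolding half_power_mult_powr by simp
    then have "J' = J + int j" by (simp add: powr_inj)
    then show ?thesis using that(1) by simp
  qed
  then show ?thesis
    by (auto simp: triple_subcubes_def dyadic_grid_eq_range side_def half_power_mult_powr)
qed

lemma far_weight_sum_triple_subcubes_le:
  fixes Q0 :: "'n::finite cube" and J :: int and j :: nat
  assumes Q0: "snd Q0 > 0"
  defines "L \<equiv> (2::real) powr (- real_of_int (J + int j))"
  shows "(\<Sum>\<^sub>\<infinity>P\<in>triple_subcubes \<omega> j (grid_cube \<omega> J m). ennreal (far_weight Q0 P))
    \<le> ennreal (if cube_set (triple (grid_cube \<omega> J m)) \<inter> cube_set Q0 \<noteq> {} \<and> 2 * snd Q0 \<le> L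
               then 2^CARD('n) * (snd Q0 / L)^(2 * CARD('n)) else 0)"
proof (cases "cube_set (triple (grid_cube \<omega> J m)) \<inter> cube_set Q0 \<noteq> {} \<and> 2 * snd Q0 \<le> L")
  case False
  have "far_weight Q0 P = 0" if "P \<in> triple_subcubes \<omega> j (grid_cube \<omega> J m)" for P
    using False that unfolding mem_triple_subcubes_grid_cube far_weight_def L_def by auto
  then show ?thesis by (simp add: infsum_0)
next
  case True
  let ?T = "{m'. cube_set (grid_cube \<omega> (J + int j) m') \<inter> cube_set Q0 \<noteq> {}}"
  have small: "snd Q0 \<le> 2 powr (- real_of_int (J + int j))" using True Q0 unfolding L_def by simp
  have "(\<Sum>\<^sub>\<infinity>P\<in>triple_subcubes \<omega> j (grid_cube \<omega> J m). ennreal (far_weight Q0 P))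
      \<le> (\<Sum>\<^sub>\<infinity>P\<in>range (grid_cube \<omega> (J + int j)). ennreal (far_weight Q0 P))"
    by (intro infsum_mono_neutral) (auto simp: mem_triple_subcubes_grid_cube)
  also have "\<dots> = (\<Sum>\<^sub>\<infinity>m'. ennreal (far_weight Q0 (grid_cube \<omega> (J + int j) m')))"
    by (simp add: infsum_reindex[OF inj_grid_cube_scale] comp_def)
  also have "\<dots> \<le> ennreal (real (2^CARD('n)) * (snd Q0 / L)^(2 * CARD('n)))"
  proof (rule infsum_ennreal_le_card_mult)
    show "finite ?T" "card ?T \<le> 2^CARD('n)"
      using finite_grid_cubes_meeting[OF small] card_grid_cubes_meeting_le[OF small] by simp_all
    show "far_weight Q0 (grid_cube \<omega> (J + int j) m') = 0" if "m' \<notin> ?T" for m'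
      using that unfolding far_weight_def by auto
    show "far_weight Q0 (grid_cube \<omega> (J + int j) m') \<le> (snd Q0 / L)^(2 * CARD('n))" for m'
      using far_weight_le[of Q0 "grid_cube \<omega> (J + int j) m'"] by (simp add: L_def)
  qed
  finally show ?thesis using True by simp
qed

lemma far_weight_sum_scale_le:
  fixes Q0 :: "'n::finite cube" and J J0 :: int and j :: nat
  assumes Q0: "snd Q0 = 2 powr (- real_of_int J0)"
  shows "(\<Sum>\<^sub>\<infinity>m. \<Sum>\<^sub>\<infinity>P\<in>triple_subcubes \<omega> j (grid_cube \<omega> J m). ennreal (far_weight Q0 P))
    \<le> ennreal (8^CARD('n) * (if J < J0 - int j then (1/2) ^ nat (J0 - int j - J) else 0))"
proof -
  define d where "d = CARD('n)"
  define L where "L = (2::real) powr (- real_of_int (J + int j))"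
  define bound where "bound m = (if cube_set (triple (grid_cube \<omega> J m)) \<inter> cube_set Q0 \<noteq> {} \<and> 2 * snd Q0 \<le> L
      then 2^d * (snd Q0 / L)^(2 * d) else 0)" for m
  have s0: "snd Q0 > 0" unfolding Q0 by simp
  have "(\<Sum>\<^sub>\<infinity>m. \<Sum>\<^sub>\<infinity>P\<in>triple_subcubes \<omega> j (grid_cube \<omega> J m). ennreal (far_weight Q0 P))
      \<le> (\<Sum>\<^sub>\<infinity>m. ennreal (bound m))"
    unfolding bound_def L_def d_def
    by (intro infsum_mono ennreal_summable_on far_weight_sum_triple_subcubes_le[OF s0])
  also have "\<dots> \<le> ennreal (8^d * (if J < J0 - int j then (1/2) ^ nat (J0 - int j - J) else 0))"
  proof (cases "J < J0 - int j")
    case False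
    then have "L \<le> snd Q0" unfolding L_def Q0 by simp
    then have "bound m = 0" for m using s0 unfolding bound_def by auto
    then show ?thesis by (simp add: infsum_0)
  next
    case True
    define k where "k = nat (J0 - int j - J)"
    have k: "k \<ge> 1" unfolding k_def using True by simp
    have ratio: "snd Q0 / L = (1/2)^k"
      unfolding Q0 L_def k_def using True by (subst two_powr_div_eq_half_power) (simp_all add: algebra_simps)
    have "L > 0" unfolding L_def by simp
    then have "snd Q0 \<le> L"
      using power_decreasing[OF k, of "1/2::real"] s0 unfolding ratio[symmetric] by (simp add: divide_le_eq)
    also have "L \<le> 2 powr (- real_of_int J)"
      unfolding L_def half_power_mult_powr[symmetric] by (simp add: power_le_one)
    finally have small: "snd Q0 \<le> 2 powr (- real_of_int J)" .
    have "(\<Sum>\<^sub>\<infinity>m. ennreal (bound m)) \<le> ennreal (real (4^d) * (2^d * (snd Q0 / L)^(2 * d)))"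
      unfolding d_def
      by (rule infsum_ennreal_le_card_mult[OF finite_triples_meeting[OF small]
            card_triples_meeting_le[OF small]])
        (auto simp: bound_def d_def)
    also have "real (4^d) * (2^d * (snd Q0 / L)^(2 * d)) \<le> 8^d * (1/2)^k"
    proof -
      have "((1/2::real)^k)^(2 * d) \<le> (1/2)^k"
        unfolding power_mult[symmetric] using k by (intro power_decreasing) (auto simp: d_def)
      moreover have "(4::real)^d * 2^d = 8^d" by (simp flip: power_mult_distrib)
      ultimately show ?thesis
        unfolding ratio by (simp add: mult.assoc[symmetric])
    qed
    finally show ?thesis using True by (simp add: k_def ennreal_leI)
  qed
  finally show ?thesis unfolding d_def .
qed

lemma far_weight_sum_le:
  fixes Q0 :: "'n::finite cube"
  assumes "Q0 \<in> dyadic_grid \<omega>"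
  shows "(\<Sum>\<^sub>\<infinity>K\<in>dyadic_grid \<omega>. \<Sum>\<^sub>\<infinity>P\<in>triple_subcubes \<omega> j K. ennreal (far_weight Q0 P))
    \<le> ennreal (8^CARD('n))"
proof -
  obtain J0 m0 where "Q0 = grid_cube \<omega> J0 m0" using assms by (auto simp: dyadic_grid_eq_range)
  then have Q0: "snd Q0 = 2 powr (- real_of_int J0)" by simp
  let ?w = "\<lambda>K. \<Sum>\<^sub>\<infinity>P\<in>triple_subcubes \<omega> j K. ennreal (far_weight Q0 P)"
  have "(\<Sum>\<^sub>\<infinity>K\<in>dyadic_grid \<omega>. ?w K) = (\<Sum>\<^sub>\<infinity>(J, m). ?w (grid_cube \<omega> J m))"
    unfolding dyadic_grid_eq_range
    by (subst infsum_reindex[OF inj_grid_cube]) (simp add: comp_def case_prod_unfold)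
  also have "\<dots> \<le> (\<Sum>\<^sub>\<infinity>J. \<Sum>\<^sub>\<infinity>m. ?w (grid_cube \<omega> J m))"
    using infsum_ennreal_pair_le_iterated[of "\<lambda>(J, m). ?w (grid_cube \<omega> J m)"] by simp
  also have "\<dots> \<le> (\<Sum>\<^sub>\<infinity>J. ennreal (8^CARD('n)) *
      ennreal (if J < J0 - int j then (1/2) ^ nat (J0 - int j - J) else 0))"
    using far_weight_sum_scale_le[OF Q0, of \<omega> j]
    by (intro infsum_mono[OF ennreal_summable_on ennreal_summable_on]) (simp add: ennreal_mult)
  also have "\<dots> = ennreal (8^CARD('n)) * ennreal ((1/2) / (1 - 1/2))"
    by (simp add: infsum_ennreal_cmult infsum_ennreal_geometric_int)
  finally show ?thesis by simp
qed

lemma B_out_le: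
  fixes \<omega> :: "int \<Rightarrow> 'n::finite \<Rightarrow> bool" and f g :: "real^'n \<Rightarrow> real"
  assumes Q0: "Q0 \<in> dyadic_grid \<omega>"
    and f: "integrable lborel f" "\<And>x. x \<notin> cube_set Q0 \<Longrightarrow> f x = 0"
    and g: "\<And>x. x \<notin> cube_set Q0 \<Longrightarrow> g x = 0"
  shows "B_out \<omega> j Q0 g f
    \<le> ennreal (card {\<epsilon>::'n \<Rightarrow> bool. \<epsilon> \<noteq> (\<lambda>_. False)} * (8/3)^CARD('n) * (1/2)^(j * CARD('n)))
       * avg_abs g Q0 * (avg_abs f Q0)^2 * ennreal (vol Q0)"
proof -
  define c where "c = card {\<epsilon>::'n \<Rightarrow> bool. \<epsilon> \<noteq> (\<lambda>_. False)} / 3^CARD('n) * (1/2::real)^(j * CARD('n))"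
  define A where "A = ennreal c * avg_abs g Q0 * (avg_abs f Q0)^2 * ennreal (vol Q0)"
  have "B_out \<omega> j Q0 g f \<le> (\<Sum>\<^sub>\<infinity>K\<in>dyadic_grid \<omega>. \<Sum>\<^sub>\<infinity>P\<in>triple_subcubes \<omega> j K. A * ennreal (far_weight Q0 P))"
    unfolding B_out_eq_infsum
  proof (rule infsum_mono[OF ennreal_summable_on ennreal_summable_on])
    fix K assume K: "K \<in> dyadic_grid \<omega>"
    have "avg_abs g (triple K) * (\<Sum>\<^sub>\<infinity>P\<in>triple_subcubes \<omega> j K.
            ennreal (haar_sq f P / vol P) * emeasure lborel (cube_set P - cube_set Q0))
        = (\<Sum>\<^sub>\<infinity>P\<in>triple_subcubes \<omega> j K.
            avg_abs g (triple K) * (ennreal (haar_sq f P / vol P) * emeasure lborel (cube_set P - cube_set Q0)))"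
      by (rule infsum_ennreal_cmult[symmetric])
    also have "\<dots> \<le> (\<Sum>\<^sub>\<infinity>P\<in>triple_subcubes \<omega> j K. A * ennreal (far_weight Q0 P))"
      unfolding A_def c_def using B_out_term_le[OF Q0 K _ f g]
      by (intro infsum_mono[OF ennreal_summable_on ennreal_summable_on]) auto
    finally show "avg_abs g (triple K) * (\<Sum>\<^sub>\<infinity>P\<in>triple_subcubes \<omega> j K.
            ennreal (haar_sq f P / vol P) * emeasure lborel (cube_set P - cube_set Q0))
        \<le> (\<Sum>\<^sub>\<infinity>P\<in>triple_subcubes \<omega> j K. A * ennreal (far_weight Q0 P))" .
  qed
  also have "\<dots> = A * (\<Sum>\<^sub>\<infinity>K\<in>dyadic_grid \<omega>. \<Sum>\<^sub>\<infinity>P\<in>triple_subcubes \<omega> j K. ennreal (far_weight Q0 P))"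
    by (simp add: infsum_ennreal_cmult)
  also have "\<dots> \<le> A * ennreal (8^CARD('n))"
    by (intro mult_left_mono far_weight_sum_le[OF Q0]) simp
  also have "\<dots> = ennreal c * ennreal (8^CARD('n)) * avg_abs g Q0 * (avg_abs f Q0)^2 * ennreal (vol Q0)"
    unfolding A_def by (simp only: mult_ac)
  also have "ennreal c * ennreal (8^CARD('n)) = ennreal (c * 8^CARD('n))"
    by (rule ennreal_mult'[symmetric]) (simp add: c_def)
  also have "c * 8^CARD('n) = card {\<epsilon>::'n \<Rightarrow> bool. \<epsilon> \<noteq> (\<lambda>_. False)} * (8/3)^CARD('n) * (1/2)^(j * CARD('n))"
    unfolding c_def by (simp add: power_divide)
  finally show ?thesis .
qed

theorem lemma8p1:
  "\<exists>C>0. \<forall>(\<omega> :: int \<Rightarrow> 'n::finite \<Rightarrow> bool) (j::nat) Q0 (f :: real^'n \<Rightarrow> real) (g :: real^'n \<Rightarrow> real).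
     Q0 \<in> dyadic_grid \<omega> \<longrightarrow>
     f \<in> borel_measurable lborel \<longrightarrow> g \<in> borel_measurable lborel \<longrightarrow>
     (\<exists>M. AE x in lborel. \<bar>f x\<bar> \<le> M) \<longrightarrow> (\<exists>M. AE x in lborel. \<bar>g x\<bar> \<le> M) \<longrightarrow>
     (\<forall>x. x \<notin> cube_set Q0 \<longrightarrow> f x = 0) \<longrightarrow> (\<forall>x. x \<notin> cube_set Q0 \<longrightarrow> g x = 0) \<longrightarrow>
     B_out \<omega> j Q0 g f \<le>
       ennreal (C * (1/2) ^ (j * CARD('n))) * avg_abs g Q0 * (avg_abs f Q0)^2 * ennreal (vol Q0)"
proof (intro exI[of _ "card {\<epsilon>::'n \<Rightarrow> bool. \<epsilon> \<noteq> (\<lambda>_. False)} * (8/3)^CARD('n)"] conjI allI impI)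
  show "0 < real (card {\<epsilon>::'n \<Rightarrow> bool. \<epsilon> \<noteq> (\<lambda>_. False)}) * (8/3)^CARD('n)"
    using card_nonzero_signs_pos[where 'n='n] by (intro mult_pos_pos) auto
next
  fix \<omega> :: "int \<Rightarrow> 'n \<Rightarrow> bool" and j Q0 and f g :: "real^'n \<Rightarrow> real"
  assume Q0: "Q0 \<in> dyadic_grid \<omega>" and "f \<in> borel_measurable lborel"
    and "\<exists>M. AE x in lborel. \<bar>f x\<bar> \<le> M"
    and "\<forall>x. x \<notin> cube_set Q0 \<longrightarrow> f x = 0" "\<forall>x. x \<notin> cube_set Q0 \<longrightarrow> g x = 0"
  moreover have "snd Q0 \<ge> 0" using Q0 by (auto simp: dyadic_grid_eq_range)
  ultimately have "integrable lborel f"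
    using integrable_bounded_supported_cube by blast
  then show "B_out \<omega> j Q0 g f \<le> ennreal (real (card {\<epsilon>::'n \<Rightarrow> bool. \<epsilon> \<noteq> (\<lambda>_. False)}) * (8/3)^CARD('n)
      * (1/2) ^ (j * CARD('n))) * avg_abs g Q0 * (avg_abs f Q0)^2 * ennreal (vol Q0)"
    using B_out_le[OF Q0] \<open>\<forall>x. x \<notin> cube_set Q0 \<longrightarrow> f x = 0\<close> \<open>\<forall>x. x \<notin> cube_set Q0 \<longrightarrow> g x = 0\<close>
    by blast
qed

end
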